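(* Let $a_0,a_1,a_2$ be real numbers and let $(F(n,k))_{n\ge 0,\,k\in\mathbb{Z}}$ be defined by $F(0,0)=1$, $F(n,k)=0$ whenever $k<0$ or $k>n$, and \[ F(n,k)=F(n-1,k-1)+(a_2n+a_1k+a_0)\,F(n-1,k)\qquad(n\ge1). \] Then for all integers $0\le k\le n$, \[ F(n,k)=\sum_{1\le p_1<p_2<\cdots<p_{n-k}\le n}\ \prod_{i=1}^{n-k}\big((a_2+a_1)p_i-a_1 i+a_0\big). \]
   Context: The sum runs over all strictly increasing sequences of $n-k$ integers in $\{1,\dots,n\}$; an empty product equals $1$. *)

theory Defs
  imports Complex_Main
begin

fun F :: "real \<Rightarrow> real \<Rightarrow> real \<Rightarrow> nat \<Rightarrow> int \<Rightarrow> real" where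
  "F a0 a1 a2 0 k = (if k = 0 then 1 else 0)"
| "F a0 a1 a2 (Suc n) k =
     (if k < 0 \<or> k > int (Suc n) then 0
      else F a0 a1 a2 n (k - 1)
           + (a2 * real (Suc n) + a1 * real_of_int k + a0) * F a0 a1 a2 n k)"

text \<open>Strictly increasing sequences p_1 < ... < p_m with values in {1..n},
  encoded as functions on nat that are 0 outside the index range {1..m}.\<close>
definition incseqs :: "nat \<Rightarrow> nat \<Rightarrow> (nat \<Rightarrow> nat) set" where
  "incseqs m n = {p. (\<forall>i\<in>{1..m}. p i \<in> {1..n})
                    \<and> (\<forall>i j. 1 \<le> i \<longrightarrow> i < j \<longrightarrow> j \<le> m \<longrightarrow> p i < p j)
                    \<and> (\<forall>i. i \<notin> {1..m} \<longrightarrow> p i = 0)}"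

end

theory Submission
  imports Defs
begin

text \<open>For any weight w, the sum over increasing sequences p_1 < ... < p_m in {1..n} of
  \<Prod>i. w i (p i) satisfies the recurrence S(m+1, n+1) = S(m+1, n) + w (m+1) (n+1) * S(m, n):
  either the last term is at most n, or it equals n+1 and the remaining terms form a
  sequence in {1..n}. For m = n - k and w i p = (a2 + a1) p - a1 i + a0 the new weight is
  a2 (n+1) + a1 k + a0, so this is exactly the recurrence defining F.\<close>

lemma finite_incseqs: "finite (incseqs m n)"
proof (rule finite_subset)
  show "incseqs m n \<subseteq> {p. \<forall>i. (i \<in> {1..m} \<longrightarrow> p i \<in> {1..n}) \<and> (i \<notin> {1..m} \<longrightarrow> p i = 0)}"
    unfolding incseqs_def by auto
  show "finite \<dots>"
    by (rule finite_set_of_finite_funs) auto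
qed

lemma incseqs_0: "incseqs 0 n = {\<lambda>_. 0}"
  unfolding incseqs_def by auto

lemma incseqsI:
  assumes "\<And>i. i \<in> {1..m} \<Longrightarrow> p i \<in> {1..n}"
    and "\<And>i j. 1 \<le> i \<Longrightarrow> i < j \<Longrightarrow> j \<le> m \<Longrightarrow> p i < p j"
    and "\<And>i. i \<notin> {1..m} \<Longrightarrow> p i = 0"
  shows "p \<in> incseqs m n"
  using assms unfolding incseqs_def by blast

lemma incseqs_range: "p \<in> incseqs m n \<Longrightarrow> i \<in> {1..m} \<Longrightarrow> p i \<in> {1..n}"
  unfolding incseqs_def by blast

lemma incseqs_less: "p \<in> incseqs m n \<Longrightarrow> 1 \<le> i \<Longrightarrow> i < j \<Longrightarrow> j \<le> m \<Longrightarrow> p i < p j"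
  unfolding incseqs_def by blast

lemma incseqs_outside: "p \<in> incseqs m n \<Longrightarrow> i \<notin> {1..m} \<Longrightarrow> p i = 0"
  unfolding incseqs_def by blast

lemma incseqs_index_le:
  assumes "p \<in> incseqs m n" "i \<in> {1..m}"
  shows "i \<le> p i"
  using assms(2)
proof (induction i)
  case (Suc i)
  show ?case
  proof (cases "i = 0")
    case True
    then show ?thesis using incseqs_range[OF assms(1) Suc.prems] by simp
  next
    case False
    then have "i \<le> p i" using Suc by simp
    also have "p i < p (Suc i)" using incseqs_less[OF assms(1)] Suc.prems False by simp
    finally show ?thesis by simp
  qed
qed simp

lemma incseqs_empty:
  assumes "n < m"
  shows "incseqs m n = {}"
proof (intro equals0I)
  fix p assume p: "p \<in> incseqs m n"
  have "m \<le> p m" using incseqs_index_le[OF p] assms by simp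
  moreover have "p m \<le> n" using incseqs_range[OF p] assms by simp
  ultimately show False using assms by simp
qed

lemma incseqs_Suc_iff:
  "p \<in> incseqs (Suc m) n \<longleftrightarrow>
     p (Suc m) \<in> {1..n} \<and> p(Suc m := 0) \<in> incseqs m (p (Suc m) - 1)"
proof
  assume p: "p \<in> incseqs (Suc m) n"
  have "p (Suc m := 0) \<in> incseqs m (p (Suc m) - 1)"
  proof (rule incseqsI)
    fix i assume i: "i \<in> {1..m}"
    then have "p i < p (Suc m)" using incseqs_less[OF p] by simp
    with i show "(p(Suc m := 0)) i \<in> {1..p (Suc m) - 1}"
      using incseqs_range[OF p, of i] by simp
  qed (use incseqs_less[OF p] incseqs_outside[OF p] in auto)
  with incseqs_range[OF p] show "p (Suc m) \<in> {1..n} \<and> p(Suc m := 0) \<in> incseqs m (p (Suc m) - 1)"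
    by simp
next
  assume "p (Suc m) \<in> {1..n} \<and> p(Suc m := 0) \<in> incseqs m (p (Suc m) - 1)"
  then have last: "p (Suc m) \<in> {1..n}" and init: "p(Suc m := 0) \<in> incseqs m (p (Suc m) - 1)"
    by blast+
  show "p \<in> incseqs (Suc m) n"
  proof (rule incseqsI)
    fix i assume "i \<in> {1..Suc m}"
    then show "p i \<in> {1..n}"
      using last incseqs_range[OF init, of i] by (cases "i = Suc m") auto
  next
    fix i j assume "1 \<le> i" "i < j" "j \<le> Suc m"
    then show "p i < p j"
      using incseqs_range[OF init, of i] incseqs_less[OF init, of i j] by (cases "j = Suc m") auto
  next
    fix i assume "i \<notin> {1..Suc m}"
    then show "p i = 0" using incseqs_outside[OF init, of i] by (auto split: if_splits)
  qed
qed

lemma incseqs_mono: "n \<le> n' \<Longrightarrow> incseqs m n \<subseteq> incseqs m n'"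
  unfolding incseqs_def by auto

lemma incseqs_Suc_Suc:
  "incseqs (Suc m) (Suc n) = incseqs (Suc m) n \<union> (\<lambda>q. q(Suc m := Suc n)) ` incseqs m n"
proof (intro equalityI subsetI)
  fix p assume p: "p \<in> incseqs (Suc m) (Suc n)"
  show "p \<in> incseqs (Suc m) n \<union> (\<lambda>q. q(Suc m := Suc n)) ` incseqs m n"
  proof (cases "p (Suc m) = Suc n")
    case True
    with p have "p(Suc m := 0) \<in> incseqs m n"
      by (simp add: incseqs_Suc_iff)
    moreover have "p = (p(Suc m := 0))(Suc m := Suc n)"
      using True by (simp add: fun_upd_idem)
    ultimately show ?thesis by blast
  next
    case False
    with p have "p \<in> incseqs (Suc m) n"
      by (simp add: incseqs_Suc_iff)
    then show ?thesis ..
  qed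
next
  fix p assume "p \<in> incseqs (Suc m) n \<union> (\<lambda>q. q(Suc m := Suc n)) ` incseqs m n"
  then show "p \<in> incseqs (Suc m) (Suc n)"
  proof
    assume "p \<in> incseqs (Suc m) n"
    then show ?thesis using incseqs_mono[of n "Suc n" "Suc m"] by auto
  next
    assume "p \<in> (\<lambda>q. q(Suc m := Suc n)) ` incseqs m n"
    then obtain q where q: "q \<in> incseqs m n" and p_def: "p = q(Suc m := Suc n)" by blast
    have "q(Suc m := 0) = q" using incseqs_outside[OF q, of "Suc m"] by auto
    with q show ?thesis unfolding p_def by (simp add: incseqs_Suc_iff)
  qed
qed

definition incseqs_sum :: "(nat \<Rightarrow> nat \<Rightarrow> 'a::comm_semiring_1) \<Rightarrow> nat \<Rightarrow> nat \<Rightarrow> 'a" where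
  "incseqs_sum w m n = (\<Sum>p\<in>incseqs m n. \<Prod>i=1..m. w i (p i))"

lemma incseqs_sum_0: "incseqs_sum w 0 n = 1"
  by (simp add: incseqs_sum_def incseqs_0)

lemma incseqs_sum_eq_0: "n < m \<Longrightarrow> incseqs_sum w m n = 0"
  by (simp add: incseqs_sum_def incseqs_empty)

lemma incseqs_sum_Suc_Suc:
  "incseqs_sum w (Suc m) (Suc n) = incseqs_sum w (Suc m) n + w (Suc m) (Suc n) * incseqs_sum w m n"
proof -
  let ?term = "\<lambda>m p. \<Prod>i=1..m. w i (p i)"
  let ?extend = "\<lambda>q. q(Suc m := Suc n)"
  have disjoint: "incseqs (Suc m) n \<inter> ?extend ` incseqs m n = {}"
  proof (intro equals0I)
    fix p assume "p \<in> incseqs (Suc m) n \<inter> ?extend ` incseqs m n"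
    then obtain q where "?extend q \<in> incseqs (Suc m) n" by blast
    from incseqs_range[OF this, of "Suc m"] show False by simp
  qed
  have restore: "(?extend q)(Suc m := 0) = q" if "q \<in> incseqs m n" for q
    using incseqs_outside[OF that, of "Suc m"] by (simp add: fun_upd_idem)
  have "inj_on ?extend (incseqs m n)"
    by (rule inj_onI) (metis restore)
  then have "sum (?term (Suc m)) (?extend ` incseqs m n) = (\<Sum>q\<in>incseqs m n. ?term (Suc m) (?extend q))"
    by (rule sum.reindex_cong) simp_all
  also have "\<dots> = (\<Sum>q\<in>incseqs m n. w (Suc m) (Suc n) * ?term m q)"
    by (intro sum.cong refl) (simp add: prod.nat_ivl_Suc' mult.commute)
  finally show ?thesis
    unfolding incseqs_sum_def incseqs_Suc_Suc
    by (simp add: sum.union_disjoint finite_incseqs disjoint sum_distrib_left)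
qed

lemma F_outside: "k < 0 \<or> int n < k \<Longrightarrow> F a0 a1 a2 n k = 0"
  by (cases n) auto

lemma F_Suc_0: "F a0 a1 a2 (Suc n) 0 = (a2 * real (Suc n) + a0) * F a0 a1 a2 n 0"
  by (simp add: F_outside)

lemma F_Suc_Suc:
  "F a0 a1 a2 (Suc n) (int (Suc k)) =
     F a0 a1 a2 n (int k) + (a2 * real (Suc n) + a1 * real (Suc k) + a0) * F a0 a1 a2 n (int (Suc k))"
  by (simp add: F_outside)

lemma F_eq_incseqs_sum:
  fixes a0 a1 a2 :: real
  defines "w \<equiv> \<lambda>i p. (a2 + a1) * real p - a1 * real i + a0"
  assumes "k \<le> n"
  shows "F a0 a1 a2 n (int k) = incseqs_sum w (n - k) n"
  using assms(2)
proof (induction n arbitrary: k)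
  case 0
  then show ?case by (simp add: incseqs_sum_0)
next
  case (Suc n)
  have weight: "w (Suc (n - j)) (Suc n) = a2 * real (Suc n) + a1 * real j + a0" if "j \<le> n" for j
    using that unfolding w_def by (simp add: of_nat_diff algebra_simps)
  show ?case
  proof (cases k)
    case 0
    have "F a0 a1 a2 (Suc n) 0 = (a2 * real (Suc n) + a0) * incseqs_sum w n n"
      unfolding F_Suc_0 using Suc.IH[of 0] by simp
    also have "\<dots> = incseqs_sum w (Suc n) (Suc n)"
      using weight[of 0] by (simp add: incseqs_sum_Suc_Suc incseqs_sum_eq_0)
    finally show ?thesis using 0 by simp
  next
    case (Suc j)
    let ?c = "a2 * real (Suc n) + a1 * real (Suc j) + a0"
    have "F a0 a1 a2 (Suc n) (int k) = F a0 a1 a2 n (int j) + ?c * F a0 a1 a2 n (int (Suc j))"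
      unfolding Suc by (rule F_Suc_Suc)
    also have "\<dots> = incseqs_sum w (Suc n - k) (Suc n)"
    proof (cases "j = n")
      case True
      then show ?thesis
        using Suc Suc.IH[of n] by (simp add: F_outside incseqs_sum_0)
    next
      case False
      with Suc \<open>k \<le> Suc n\<close> have "Suc j \<le> n" by simp
      then have "n - j = Suc (n - Suc j)" "Suc n - k = n - j" using Suc by simp_all
      then show ?thesis
        using Suc.IH[of j] Suc.IH[of "Suc j"] weight[OF \<open>Suc j \<le> n\<close>] \<open>Suc j \<le> n\<close>
        by (simp add: incseqs_sum_Suc_Suc)
    qed
    finally show ?thesis .
  qed
qed

theorem mainTheorem2:
  fixes a0 a1 a2 :: real and n k :: nat
  assumes "k \<le> n"
  shows "F a0 a1 a2 n (int k) =
    (\<Sum>p\<in>incseqs (n - k) n.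
       \<Prod>i=1..n - k. (a2 + a1) * real (p i) - a1 * real i + a0)"
  using F_eq_incseqs_sum[OF assms] unfolding incseqs_sum_def .

end
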